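(* (Krieger–Shallit) For every real number $\alpha>1$ there exists an infinite sequence over a finite alphabet whose critical exponent equals $\alpha$.
   Context: If $X$ is a nonempty string and $Y$ is a prefix of $X$ (possibly empty), then any string $Z=X X\cdots X Y$ (one or more copies of $X$ followed by $Y$) is called a fractional power of $X$, and $|Z|/|X|$ is its exponent. The critical exponent of an infinite sequence $\omega$ is the least upper bound of the exponents of all fractional powers that occur as substrings (blocks of consecutive letters) of $\omega$. *)

theory Defs
  imports "HOL-Analysis.Analysis" "HOL-Library.Sublist"
begin

definition frac_power_of :: "'a list \<Rightarrow> 'a list \<Rightarrow> bool" where
  "frac_power_of Z X \<longleftrightarrow> X \<noteq> [] \<and>
     (\<exists>k Y. k \<ge> 1 \<and> prefix Y X \<and> Z = concat (replicate k X) @ Y)"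

definition occurs_in :: "'a list \<Rightarrow> (nat \<Rightarrow> 'a) \<Rightarrow> bool" where
  "occurs_in Z w \<longleftrightarrow> (\<exists>i. Z = map w [i..<i + length Z])"

definition critical_exponent :: "(nat \<Rightarrow> 'a) \<Rightarrow> ereal" where
  "critical_exponent w = Sup {ereal (real (length Z) / real (length X)) | Z X.
      frac_power_of Z X \<and> occurs_in Z w}"

end

theory Submission
  imports Defs
begin

(* Fix N with 2^N > alpha and 2 alpha <= (alpha - 1) 2^N.  The word is a concatenation of
   blocks B_0 B_1 B_2 ...; block k has period P k = 2^(N k) and length L k = floor (alpha P k),
   so it is a fractional power of exponent L k / P k, which tends to alpha.  One period of
   block k is the base word j |-> letter N j on [0, P k): position 0 carries a marker, position
   j > 0 records j mod 2^N together with one bit of the odd part of j.  Every letter of block k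
   is also tagged with the parity of k.

   Finally,
   in the locale block_word, it shows R + p <= alpha p for every repetition: inside one block
   by the cyclic bound, and across blocks because the parity tags force block boundaries onto
   block boundaries, so a repetition spans at most one boundary while its period is at least
   the length of the block following the one it covers; the growth condition on N then gives
   the bound. *)

fun oddpart :: "nat \<Rightarrow> nat" where
  "oddpart n = (if n = 0 then 0 else if even n then oddpart (n div 2) else n)"
declare oddpart.simps[simp del]

lemma oddpart_pow2_mult: "odd u \<Longrightarrow> oddpart (2 ^ k * u) = u"
proof (induction k)
  case 0
  then show ?case by (simp add: oddpart.simps)
next
  case (Suc k)
  have "oddpart (2 ^ Suc k * u) = oddpart (2 ^ k * u)"
    using Suc.prems by (subst oddpart.simps) (auto simp: mult.assoc)
  with Suc show ?case by simp
qed

lemma pow2_odd_decomposition: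
  assumes "(x::nat) \<noteq> 0"
  obtains a y where "x = 2 ^ a * y" and "odd y"
proof -
  obtain y where "x = 2 ^ multiplicity 2 x * y" "\<not> 2 dvd y"
    using multiplicity_decompose'[of x 2] assms by auto
  with that show ?thesis by blast
qed

(* Any 2d consecutive numbers contain an odd multiple of d; used to locate a position where
   the odd-part bit of the base word is visible. *)
lemma odd_multiple_in_interval:
  assumes "(d::nat) > 0"
  obtains m where "j0 \<le> d * (2 * m + 1)" and "d * (2 * m + 1) < j0 + 2 * d"
proof -
  define x where "x = j0 + d - 1"
  define m where "m = x div (2 * d)"
  have x: "2 * d * m + x mod (2 * d) = x" and rem: "x mod (2 * d) < 2 * d"
    using assms unfolding m_def by (simp_all add: mult.commute)
  have "d * (2 * m + 1) = x - x mod (2 * d) + d"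
    using x by (simp add: algebra_simps)
  then have "j0 \<le> d * (2 * m + 1)" and "d * (2 * m + 1) < j0 + 2 * d"
    using x rem assms unfolding x_def by linarith+
  then show ?thesis by (rule that)
qed

definition letter :: "nat \<Rightarrow> nat \<Rightarrow> nat" where
  "letter r j = (if j = 0 then 2 ^ (r + 1) else 2 * (j mod 2 ^ r) + (oddpart j div 2 ^ r) mod 2)"

lemma letter_less_marker: "j > 0 \<Longrightarrow> letter r j < 2 ^ (r + 1)"
proof -
  assume "j > 0"
  have "j mod 2 ^ r < 2 ^ r" by simp
  hence "j mod 2 ^ r + 1 \<le> 2 ^ r" by linarith
  moreover have "(oddpart j div 2 ^ r) mod 2 \<le> 1" by simp
  ultimately show ?thesis using \<open>j > 0\<close> by (simp add: letter_def)
qed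

lemma letter_le: "letter r j \<le> 2 ^ (r + 1)"
  using letter_less_marker[of j r] by (cases "j = 0") (auto simp: letter_def)

lemma letter_eq_marker_iff: "letter r j = 2 ^ (r + 1) \<longleftrightarrow> j = 0"
  using letter_less_marker[of j r] by (auto simp: letter_def)

lemma double_plus_bit_inj:
  "(b::nat) < 2 \<Longrightarrow> b' < 2 \<Longrightarrow> 2 * x + b = 2 * y + b' \<Longrightarrow> x = y \<and> b = b'"
  by arith

lemma letter_eqD:
  assumes "j > 0" "j' > 0" "letter r j = letter r j'"
  shows "j mod 2 ^ r = j' mod 2 ^ r"
    and "(oddpart j div 2 ^ r) mod 2 = (oddpart j' div 2 ^ r) mod 2"
  using assms double_plus_bit_inj[of "(oddpart j div 2 ^ r) mod 2" "(oddpart j' div 2 ^ r) mod 2"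
      "j mod 2 ^ r" "j' mod 2 ^ r"]
  by (simp_all add: letter_def)

lemma letter_shift_dvd:
  assumes "j > 0" "letter r j = letter r (j + q)"
  shows "2 ^ r dvd q"
proof -
  have "j mod 2 ^ r = (j + q) mod 2 ^ r"
    using letter_eqD(1)[of j "j + q" r] assms by simp
  then show ?thesis using mod_eq_dvd_iff_nat[of j "j + q" "2 ^ r"] by simp
qed

(* For a < r the residue mod 2^r already
   differs; otherwise the odd multiple of 2^(a-r) in the window has odd parts differing by
   2^r q', so bit r of the odd part differs. *)
lemma letter_run_bound:
  assumes r: "r \<ge> 1" and j0: "j0 \<ge> 1" and q: "q = 2 ^ a * q'" and q': "odd q'"
    and agree: "\<forall>t<R. letter r (j0 + t) = letter r (j0 + t + q)"
  shows "R * 2 ^ r < 2 * 2 ^ a"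
proof (rule ccontr)
  assume "\<not> ?thesis"
  hence long: "2 * 2 ^ a \<le> R * 2 ^ r" by simp
  show False
  proof (cases "a < r")
    case True
    have "R > 0" using long by (cases R) auto
    with agree j0 have "2 ^ r dvd q" by (intro letter_shift_dvd[of j0]) auto
    moreover have "(2::nat) ^ r = 2 ^ a * 2 ^ (r - a)"
      using True by (simp add: power_add[symmetric])
    ultimately have "2 ^ (r - a) dvd q'" using q by simp
    moreover have "(2::nat) dvd 2 ^ (r - a)" using True by simp
    ultimately show False using q' dvd_trans by blast
  next
    case False
    define d where "d = (2::nat) ^ (a - r)"
    have d: "(2::nat) ^ a = d * 2 ^ r"
      using False by (simp add: d_def power_add[symmetric])
    obtain m where m: "j0 \<le> d * (2 * m + 1)" "d * (2 * m + 1) < j0 + 2 * d"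
      using odd_multiple_in_interval[of d j0] by (auto simp: d_def)
    define j where "j = d * (2 * m + 1)"
    have "j - j0 < R" using m long d unfolding j_def by simp
    with agree m have eq: "letter r j = letter r (j + q)"
      unfolding j_def by (metis le_add_diff_inverse)
    have "oddpart j = 2 * m + 1"
      unfolding j_def d_def by (rule oddpart_pow2_mult) simp
    moreover have "oddpart (j + q) = 2 * m + 1 + 2 ^ r * q'"
    proof -
      have "j + q = 2 ^ (a - r) * (2 * m + 1 + 2 ^ r * q')"
        using q d unfolding j_def d_def by (simp add: algebra_simps)
      moreover have "odd (2 * m + 1 + 2 ^ r * q')" using r by simp
      ultimately show ?thesis using oddpart_pow2_mult by metis
    qed
    moreover have "(2 * m + 1 + 2 ^ r * q') div 2 ^ r = (2 * m + 1) div 2 ^ r + q'"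
      by (metis add.commute div_mult_self2 power_not_zero zero_neq_numeral)
    ultimately have "((2 * m + 1) div 2 ^ r) mod 2 = ((2 * m + 1) div 2 ^ r + q') mod 2"
      using letter_eqD(2)[OF _ _ eq] m j0 unfolding j_def by simp
    moreover have "z mod 2 \<noteq> (z + q') mod 2" for z :: nat using q' by presburger
    ultimately show False by blast
  qed
qed

lemma mod_no_wrap:
  assumes "\<forall>t<R. (x + t) mod Q \<noteq> (0::nat)" and "t < R"
  shows "(x + t) mod Q = x mod Q + t"
  using assms(2)
proof (induction t)
  case 0
  show ?case by simp
next
  case (Suc t)
  have "(x + Suc t) mod Q = (if Suc ((x + t) mod Q) = Q then 0 else Suc ((x + t) mod Q))"
    using mod_Suc[of "x + t" Q] by simp
  with assms(1) Suc show ?case by (auto split: if_splits)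
qed

lemma pow2_complement_same_valuation:
  assumes c: "(c::nat) = 2 ^ a * c'" and c': "odd c'" and less: "c < 2 ^ M"
  obtains c'' where "2 ^ M - c = 2 ^ a * c''" and "odd c''"
proof -
  have "a < M"
  proof (rule ccontr)
    assume "\<not> a < M"
    then have "(2::nat) ^ M \<le> 2 ^ a" by simp
    moreover have "2 ^ a \<le> c" unfolding c using odd_pos[OF c'] by simp
    ultimately show False using less by linarith
  qed
  then have M: "(2::nat) ^ M = 2 ^ a * 2 ^ (M - a)" by (simp add: power_add[symmetric])
  with c less have "c' < 2 ^ (M - a)" by simp
  moreover have "even ((2::nat) ^ (M - a))" using \<open>a < M\<close> by simp
  ultimately have "odd (2 ^ (M - a) - c')" using c' by presburger
  moreover have "2 ^ M - c = 2 ^ a * (2 ^ (M - a) - c')"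
    unfolding M c by (simp add: diff_mult_distrib2)
  ultimately show ?thesis by (rule that[rotated])
qed

(* The markers show that neither copy wraps around,
   so the repetition is a run as in letter_run_bound with shift p mod Q or Q - p mod Q; both
   have the same 2-adic valuation a, and 2^a <= p mod Q <= p. *)
lemma cyclic_letter_run_bound:
  assumes r: "r \<ge> 1" and Q: "Q = 2 ^ M" and not_dvd: "\<not> Q dvd p"
    and agree: "\<forall>t<R. letter r ((x + t) mod Q) = letter r ((x + t + p) mod Q)"
  shows "R * 2 ^ r < 2 * p"
proof (cases "R = 0")
  case True
  then show ?thesis using not_dvd by (cases p) auto
next
  case False
  define c where "c = p mod Q"
  have "Q > 0" using Q by simp
  then have c: "0 < c" "c < Q" "c \<le> p"
    using not_dvd unfolding c_def by (auto simp: dvd_eq_mod_eq_0)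
  have shift: "(x + t + p) mod Q = ((x + t) mod Q + c) mod Q" for t
    unfolding c_def by (simp add: mod_add_eq)
  have nz: "(x + t) mod Q \<noteq> 0 \<and> (x + p + t) mod Q \<noteq> 0" if "t < R" for t
  proof -
    have eq: "letter r ((x + t) mod Q) = letter r ((x + p + t) mod Q)"
      using agree that by (simp add: ac_simps)
    have "(x + t) mod Q \<noteq> 0"
    proof
      assume "(x + t) mod Q = 0"
      then have "(x + p + t) mod Q = c" using shift[of t] c by (simp add: ac_simps)
      then have "letter r c = 2 ^ (r + 1)"
        using eq \<open>(x + t) mod Q = 0\<close> by (simp add: letter_def)
      then show False using c letter_eq_marker_iff by simp
    qed
    moreover have "(x + p + t) mod Q \<noteq> 0"
    proof
      assume "(x + p + t) mod Q = 0"
      then have "letter r ((x + t) mod Q) = 2 ^ (r + 1)" using eq by (simp add: letter_def)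
      then show False using \<open>(x + t) mod Q \<noteq> 0\<close> letter_eq_marker_iff by simp
    qed
    ultimately show ?thesis ..
  qed
  define X0 where "X0 = x mod Q"
  define Y0 where "Y0 = (x + p) mod Q"
  have agree0: "letter r (X0 + t) = letter r (Y0 + t)" if "t < R" for t
  proof -
    have "(x + t) mod Q = X0 + t"
      unfolding X0_def by (rule mod_no_wrap[OF _ that]) (use nz in blast)
    moreover have "(x + p + t) mod Q = Y0 + t"
      unfolding Y0_def by (rule mod_no_wrap[OF _ that]) (use nz in blast)
    moreover have "letter r ((x + t) mod Q) = letter r ((x + p + t) mod Q)"
      using agree that by (simp add: ac_simps)
    ultimately show ?thesis by simp
  qed
  have pos: "X0 \<ge> 1" "Y0 \<ge> 1"
    using nz[of 0] False unfolding X0_def Y0_def by auto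
  obtain a c' where c_dec: "c = 2 ^ a * c'" and c': "odd c'"
    using pow2_odd_decomposition[of c] c by blast
  have "2 ^ a \<le> c" unfolding c_dec using odd_pos[OF c'] by simp
  moreover have "R * 2 ^ r < 2 * 2 ^ a"
  proof (cases "X0 + c < Q")
    case True
    then have "Y0 = X0 + c" using shift[of 0] unfolding X0_def Y0_def by simp
    then have "\<forall>t<R. letter r (X0 + t) = letter r (X0 + t + c)"
      using agree0 by (simp add: ac_simps)
    then show ?thesis by (rule letter_run_bound[OF r pos(1) c_dec c'])
  next
    case False
    obtain c'' where c'': "Q - c = 2 ^ a * c''" "odd c''"
      using pow2_complement_same_valuation[OF c_dec c'] c Q by blast
    have "X0 < Q" unfolding X0_def using \<open>Q > 0\<close> by simp
    then have "(X0 + c) mod Q = X0 + c - Q"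
      using False c by (simp add: le_mod_geq)
    moreover have "Y0 = (X0 + c) mod Q" using shift[of 0] unfolding X0_def Y0_def by simp
    ultimately have "X0 = Y0 + (Q - c)" using False c by linarith
    then have "\<forall>t<R. letter r (Y0 + t) = letter r (Y0 + t + (Q - c))"
      using agree0 by (simp add: ac_simps)
    then show ?thesis by (rule letter_run_bound[OF r pos(2) c''])
  qed
  ultimately show ?thesis using c by linarith
qed

(* w has period p on the factor of length R + p starting at i. *)
definition repetition :: "(nat \<Rightarrow> 'a) \<Rightarrow> nat \<Rightarrow> nat \<Rightarrow> nat \<Rightarrow> bool" where
  "repetition w i p R \<longleftrightarrow> (\<forall>t<R. w (i + t) = w (i + t + p))"

lemma repetition_Suc: "repetition w i p (Suc R) \<Longrightarrow> repetition w i p R"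
  unfolding repetition_def by simp

lemma frac_power_decompose:
  assumes "frac_power_of Z X"
  obtains Z' where "Z = X @ Z'" and "prefix Z' Z"
proof -
  obtain k Y where k: "k \<ge> 1" and Y: "prefix Y X" and Z: "Z = concat (replicate k X) @ Y"
    using assms unfolding frac_power_of_def by blast
  define A where "A = concat (replicate (k - 1) X)"
  obtain k0 where k0: "k = Suc k0" using k by (cases k) auto
  have "Z = X @ (A @ Y)" unfolding Z A_def k0 by simp
  moreover have "concat (replicate k X) = A @ X"
    unfolding A_def k0 by (simp add: replicate_append_same[symmetric])
  then have "prefix (A @ Y) Z" using Y unfolding Z by (simp add: prefix_order.trans)
  ultimately show ?thesis by (rule that)
qed

lemma frac_power_occurrence_repetition:
  assumes fp: "frac_power_of Z X" and oc: "occurs_in Z w"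
  obtains i where "repetition w i (length X) (length Z - length X)"
    and "length X \<le> length Z"
proof -
  obtain i where i: "Z = map w [i..<i + length Z]" using oc unfolding occurs_in_def by blast
  obtain Z' where Z': "Z = X @ Z'" and pre: "prefix Z' Z" using fp by (rule frac_power_decompose)
  have "w (i + t) = w (i + t + length X)" if "t < length Z - length X" for t
  proof -
    have "w (i + t) = Z ! t" using that by (subst i) simp
    also have "\<dots> = Z' ! t"
    proof -
      obtain zs where zs: "Z = Z' @ zs" using pre by (auto simp: prefix_def)
      have "t < length Z'" using that Z' by simp
      then show ?thesis unfolding zs by (simp add: nth_append)
    qed
    also have "\<dots> = Z ! (t + length X)" using Z' by (simp add: nth_append)
    also have "\<dots> = w (i + t + length X)" using that Z' by (subst i) (simp add: ac_simps)
    finally show ?thesis .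
  qed
  then show ?thesis using that[of i] Z' unfolding repetition_def by simp
qed

lemma map_upt_shift: "map f [a..<a + n] = map (\<lambda>j. f (a + j)) [0..<n]"
  by (induction n) auto

lemma map_mod_upt:
  assumes "0 < p" "r \<le> p"
  shows "map (\<lambda>j. h (j mod p)) [0..<m * p + r]
       = concat (replicate m (map h [0..<p])) @ map h [0..<r]"
proof (induction m)
  case 0
  show ?case using assms by (auto intro!: map_cong)
next
  case (Suc m)
  have "[0..<Suc m * p + r] = [0..<p] @ [p..<p + (m * p + r)]"
    using upt_add_eq_append[of 0 p "m * p + r"] by (simp add: add.assoc)
  also have "[p..<p + (m * p + r)] = map (\<lambda>i. i + p) [0..<m * p + r]"
    by (simp add: map_add_upt add.commute)
  finally have "[0..<Suc m * p + r] = [0..<p] @ map (\<lambda>i. i + p) [0..<m * p + r]" .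
  moreover have "map (\<lambda>j. h (j mod p)) [0..<p] = map h [0..<p]" by (auto intro!: map_cong)
  ultimately show ?case using Suc by (simp add: comp_def)
qed

lemma periodic_factor_frac_power:
  assumes p: "0 < p" "p \<le> n" and periodic: "\<forall>j<n. w (s + j) = h (j mod p)"
  obtains Z X where "frac_power_of Z X" "occurs_in Z w" "length Z = n" "length X = p"
proof -
  define Z where "Z = map w [s..<s + n]"
  define X where "X = map h [0..<p]"
  define m where "m = n div p"
  define r where "r = n mod p"
  have n: "n = m * p + r" unfolding m_def r_def by simp
  have r: "r \<le> p" unfolding r_def using p by (simp add: less_imp_le)
  have m: "m \<ge> 1" unfolding m_def using p by (simp add: Suc_le_eq div_greater_zero_iff)
  have "Z = map (\<lambda>j. h (j mod p)) [0..<n]"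
    unfolding Z_def map_upt_shift using periodic by (auto intro!: map_cong)
  also have "\<dots> = concat (replicate m X) @ map h [0..<r]"
    unfolding X_def n by (rule map_mod_upt[OF p(1) r])
  finally have Z: "Z = concat (replicate m X) @ map h [0..<r]" .
  have "prefix (map h [0..<r]) X"
    unfolding X_def using upt_add_eq_append[of 0 r "p - r"] r by (simp add: prefixI)
  with Z m p have "frac_power_of Z X" unfolding frac_power_of_def X_def by auto
  moreover have "occurs_in Z w" unfolding occurs_in_def Z_def by auto
  ultimately show ?thesis using that by (simp add: Z_def X_def)
qed

lemma critical_exponent_eqI:
  assumes upper: "\<And>i p R. 0 < p \<Longrightarrow> repetition w i p R \<Longrightarrow> real R + real p \<le> \<alpha> * real p"
    and lower: "\<And>e. 0 < e \<Longrightarrow> \<exists>Z X. frac_power_of Z X \<and> occurs_in Z w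
                                    \<and> \<alpha> - e < real (length Z) / real (length X)"
  shows "critical_exponent w = ereal \<alpha>"
  unfolding critical_exponent_def
proof (rule Sup_eqI)
  fix y
  assume "y \<in> {ereal (real (length Z) / real (length X)) | Z X. frac_power_of Z X \<and> occurs_in Z w}"
  then obtain Z X where y: "y = ereal (real (length Z) / real (length X))"
    and fp: "frac_power_of Z X" and oc: "occurs_in Z w" by blast
  obtain i where "repetition w i (length X) (length Z - length X)" and "length X \<le> length Z"
    using frac_power_occurrence_repetition[OF fp oc] .
  moreover have X: "0 < length X" using fp unfolding frac_power_of_def by simp
  ultimately have "real (length Z) \<le> \<alpha> * real (length X)"
    using upper[of "length X" i "length Z - length X"] by simp
  then show "y \<le> ereal \<alpha>" unfolding y using X by (simp add: divide_le_eq)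
next
  fix y
  assume ub: "\<And>z. z \<in> {ereal (real (length Z) / real (length X)) | Z X.
                         frac_power_of Z X \<and> occurs_in Z w} \<Longrightarrow> z \<le> y"
  have approx: "\<exists>x. \<alpha> - e < x \<and> ereal x \<le> y" if e: "0 < e" for e
  proof -
    obtain Z X where "frac_power_of Z X" "occurs_in Z w" "\<alpha> - e < real (length Z) / real (length X)"
      using lower[OF e] by blast
    then show ?thesis using ub by blast
  qed
  show "ereal \<alpha> \<le> y"
  proof (cases y)
    case (real y')
    have "\<alpha> \<le> y' + e" if "0 < e" for e
      using approx[OF that] real by fastforce
    then have "\<alpha> \<le> y'" by (rule field_le_epsilon)
    then show ?thesis using real by simp
  next
    case PInf
    then show ?thesis by simp
  next
    case MInf
    then show ?thesis using approx[of 1] by auto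
  qed
qed

locale block_word =
  fixes \<alpha> :: real and N :: nat
  assumes alpha_gt_1: "\<alpha> > 1"
    and base_gt_alpha: "2 ^ N > \<alpha>"
    and base_large: "2 * \<alpha> \<le> (\<alpha> - 1) * 2 ^ N"
begin

definition P :: "nat \<Rightarrow> nat" where "P k = 2 ^ (N * k)"
definition L :: "nat \<Rightarrow> nat" where "L k = nat \<lfloor>\<alpha> * real (P k)\<rfloor>"
definition S :: "nat \<Rightarrow> nat" where "S k = (\<Sum>j<k. L j)"
definition blk :: "nat \<Rightarrow> nat" where "blk n = (LEAST k. n < S (Suc k))"
definition seq :: "nat \<Rightarrow> nat" where
  "seq n = 2 * letter N ((n - S (blk n)) mod P (blk n)) + blk n mod 2"

lemma N_pos: "N \<ge> 1"
  using base_gt_alpha alpha_gt_1 by (cases N) auto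

lemma P_pos: "0 < P k"
  by (simp add: P_def)

lemma P_Suc: "P (Suc k) = 2 ^ N * P k"
  by (simp add: P_def power_add)

lemma L_real: "real (L k) = of_int \<lfloor>\<alpha> * real (P k)\<rfloor>"
  using alpha_gt_1 unfolding L_def by simp

lemma L_le: "real (L k) \<le> \<alpha> * real (P k)"
  unfolding L_real by simp

lemma L_gt: "\<alpha> * real (P k) - 1 < real (L k)"
  unfolding L_real by linarith

lemma P_le_L: "P k \<le> L k"
proof -
  have "1 * real (P k) \<le> \<alpha> * real (P k)" using alpha_gt_1 by (intro mult_right_mono) auto
  then have "int (P k) \<le> \<lfloor>\<alpha> * real (P k)\<rfloor>" by (simp add: le_floor_iff)
  then show ?thesis unfolding L_def by linarith
qed

lemma L_pos: "0 < L k"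
  using P_le_L[of k] P_pos[of k] by simp

lemma L_growth: "2 * real (L k) \<le> (\<alpha> - 1) * real (L (Suc k))"
proof -
  have "2 * real (L k) \<le> 2 * \<alpha> * P k" using L_le[of k] by simp
  also have "\<dots> \<le> (\<alpha> - 1) * 2 ^ N * P k" using base_large by (intro mult_right_mono) auto
  also have "\<dots> = (\<alpha> - 1) * real (P (Suc k))" by (simp add: P_Suc)
  also have "\<dots> \<le> (\<alpha> - 1) * real (L (Suc k))"
    using alpha_gt_1 P_le_L by (intro mult_left_mono) auto
  finally show ?thesis .
qed

lemma L_strict_mono: "strict_mono L"
proof (rule strict_monoI_Suc)
  fix k
  have "real (L k) \<le> \<alpha> * P k" by (rule L_le)
  also have "\<dots> < 2 ^ N * P k" using base_gt_alpha P_pos[of k] by simp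
  also have "\<dots> = real (P (Suc k))" by (simp add: P_Suc)
  also have "\<dots> \<le> L (Suc k)" using P_le_L by simp
  finally show "L k < L (Suc k)" by simp
qed

lemma S_Suc: "S (Suc k) = S k + L k"
  by (simp add: S_def)

lemma S_strict_mono: "strict_mono S"
  by (rule strict_monoI_Suc) (simp add: S_Suc L_pos)

lemma blk_upper: "n < S (Suc (blk n))"
proof -
  have "n \<le> S n" using strict_mono_imp_increasing[OF S_strict_mono] .
  also have "S n < S (Suc n)" using strict_monoD[OF S_strict_mono, of n "Suc n"] by simp
  finally have "\<exists>k. n < S (Suc k)" by blast
  then show ?thesis unfolding blk_def by (rule LeastI_ex)
qed

lemma blk_lower: "S (blk n) \<le> n"
proof (cases "blk n")
  case (Suc k)
  have "\<not> n < S (Suc k)"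
  proof
    assume "n < S (Suc k)"
    then have "blk n \<le> k" unfolding blk_def by (rule Least_le)
    with Suc show False by simp
  qed
  with Suc show ?thesis by simp
qed (simp add: S_def)

lemma blk_ge: "S k \<le> n \<Longrightarrow> k \<le> blk n"
proof (rule ccontr)
  assume "S k \<le> n" "\<not> k \<le> blk n"
  then have "Suc (blk n) \<le> k" by simp
  then have "S (Suc (blk n)) \<le> S k" using strict_mono_less_eq[OF S_strict_mono] by blast
  with blk_upper[of n] \<open>S k \<le> n\<close> show False by simp
qed

lemma blk_eq:
  assumes "S k \<le> n" and "n < S (Suc k)"
  shows "blk n = k"
proof (rule antisym)
  show "blk n \<le> k" unfolding blk_def using assms(2) by (rule Least_le)
  show "k \<le> blk n" using assms(1) by (rule blk_ge)
qed

lemma blk_mono: "n \<le> m \<Longrightarrow> blk n \<le> blk m"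
  using blk_ge[of "blk n" m] blk_lower[of n] by simp

lemma blk_in_block: "S k \<le> n \<Longrightarrow> n < S k + L k \<Longrightarrow> blk n = k"
  using blk_eq S_Suc by simp

lemma block_start: "blk n \<noteq> blk (Suc n) \<Longrightarrow> Suc n = S (blk (Suc n))"
proof -
  assume step: "blk n \<noteq> blk (Suc n)"
  have "S (blk (Suc n)) \<le> Suc n" by (rule blk_lower)
  moreover have "\<not> S (blk (Suc n)) \<le> n"
  proof
    assume "S (blk (Suc n)) \<le> n"
    then have "blk (Suc n) \<le> blk n" by (rule blk_ge)
    with step blk_mono[of n "Suc n"] show False by simp
  qed
  ultimately show ?thesis by simp
qed

lemma seq_in_block:
  "S k \<le> n \<Longrightarrow> n < S (Suc k) \<Longrightarrow> seq n = 2 * letter N ((n - S k) mod P k) + k mod 2"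
  using blk_eq unfolding seq_def by simp

lemma seq_parity: "seq n mod 2 = blk n mod 2"
  unfolding seq_def by simp

lemma seq_bounded: "seq n \<le> 2 * 2 ^ (N + 1) + 1"
proof -
  have "letter N ((n - S (blk n)) mod P (blk n)) \<le> 2 ^ (N + 1)" by (rule letter_le)
  moreover have "blk n mod 2 \<le> 1" by simp
  ultimately show ?thesis unfolding seq_def by linarith
qed

lemma repetition_blk_parity:
  "repetition seq i p R \<Longrightarrow> t < R \<Longrightarrow> blk (i + t) mod 2 = blk (i + t + p) mod 2"
proof -
  assume "repetition seq i p R" "t < R"
  then have "seq (i + t) mod 2 = seq (i + t + p) mod 2" unfolding repetition_def by simp
  then show ?thesis by (simp add: seq_parity)
qed

(* If a repetition starts with both copies in the same block, the second copy never leaves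
   it: the first position of the next block would face a block of the other parity. *)
lemma run_stays_in_block:
  assumes p: "0 < p" and rep: "repetition seq i p R" and same: "blk (i + p) = blk i"
  shows "i + R + p \<le> S (Suc (blk i))"
  using rep
proof (induction R)
  case 0
  show ?case using blk_upper[of "i + p"] same by simp
next
  case (Suc R)
  have le: "i + R + p \<le> S (Suc (blk i))" using Suc repetition_Suc by blast
  show ?case
  proof (rule ccontr)
    assume "\<not> ?case"
    with le have eq: "i + R + p = S (Suc (blk i))" by simp
    have "blk (i + R + p) = Suc (blk i)"
      using eq L_pos[of "Suc (blk i)"] by (intro blk_in_block) auto
    moreover have "blk (i + R) = blk i"
      using eq p blk_lower[of i] by (intro blk_eq) auto
    moreover have "blk (i + R) mod 2 = blk (i + R + p) mod 2"
      using repetition_blk_parity[OF Suc.prems] by simp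
    ultimately show False by presburger
  qed
qed

(* A repetition inside block k: periods that are multiples of P k are at least P k, and the
   whole repetition has length at most L k <= alpha P k; other periods are handled by the
   cyclic bound and the choice of N. *)
lemma run_inside_block:
  assumes p: "0 < p" and rep: "repetition seq i p R"
    and inside: "S k \<le> i" "i + R + p \<le> S (Suc k)"
  shows "real R + real p \<le> \<alpha> * real p"
proof (cases "P k dvd p")
  case True
  then have "P k \<le> p" using p by (simp add: dvd_imp_le)
  have "real R + real p \<le> real (L k)" using inside S_Suc[of k] by simp
  also have "\<dots> \<le> \<alpha> * P k" by (rule L_le)
  also have "\<dots> \<le> \<alpha> * p" using alpha_gt_1 \<open>P k \<le> p\<close> by simp
  finally show ?thesis .
next
  case False
  define x where "x = i - S k"
  have "letter N ((x + t) mod P k) = letter N ((x + t + p) mod P k)" if "t < R" for t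
  proof -
    have "seq (i + t) = seq (i + t + p)" using rep that unfolding repetition_def by blast
    moreover have "i + t - S k = x + t" "i + t + p - S k = x + t + p"
      using inside unfolding x_def by auto
    ultimately show ?thesis
      using seq_in_block[of k "i + t"] seq_in_block[of k "i + t + p"] inside that
        double_plus_bit_inj by simp
  qed
  then have "R * 2 ^ N < 2 * p"
    using cyclic_letter_run_bound[OF N_pos P_def False] by blast
  then have "real (R * 2 ^ N) < real (2 * p)" by (simp only: of_nat_less_iff)
  then have "real R * 2 ^ N < 2 * real p" by simp
  also have "\<dots> \<le> (\<alpha> - 1) * 2 ^ N * real p"
    using base_large alpha_gt_1 by (intro mult_right_mono) auto
  also have "\<dots> = ((\<alpha> - 1) * real p) * 2 ^ N" by (simp add: algebra_simps)
  finally have "real R < (\<alpha> - 1) * real p" by (rule mult_right_less_imp_less) simp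
  then show ?thesis by (simp add: algebra_simps)
qed

lemma boundary_image:
  assumes p: "0 < p" and rep: "repetition seq i p R"
    and covered: "i < S m" "S m < i + R"
  shows "S (blk (S m + p)) = S m + p" and "blk (S m + p) mod 2 = m mod 2"
proof -
  obtain m' where m: "m = Suc m'" using covered(1) by (cases m) (auto simp: S_def)
  have before: "blk (S m - 1) = m'" and at: "blk (S m) = m"
    using L_pos[of m'] L_pos[of m] unfolding m by (auto intro!: blk_in_block simp: S_Suc)
  have par_before: "blk (S m - 1) mod 2 = blk (S m - 1 + p) mod 2"
    using repetition_blk_parity[OF rep, of "S m - 1 - i"] covered by simp
  have par_at: "blk (S m) mod 2 = blk (S m + p) mod 2"
    using repetition_blk_parity[OF rep, of "S m - i"] covered by simp
  have "m' mod 2 \<noteq> m mod 2" unfolding m by presburger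
  then have "blk (S m - 1 + p) \<noteq> blk (S m + p)" using par_before par_at before at by metis
  moreover have "Suc (S m - 1 + p) = S m + p" using covered by simp
  ultimately have "blk (S m - 1 + p) \<noteq> blk (Suc (S m - 1 + p))" by simp
  then have "Suc (S m - 1 + p) = S (blk (Suc (S m - 1 + p)))" by (rule block_start)
  then show "S (blk (S m + p)) = S m + p" using covered by simp
  show "blk (S m + p) mod 2 = m mod 2" using par_at at by simp
qed

(* A repetition covers at most one block boundary: two covered boundaries S m, S (m+1) would
   be mapped onto boundaries S j, S j' with j > m + 1, but then L m = S j' - S j >= L j. *)
lemma at_most_one_boundary:
  assumes p: "0 < p" and rep: "repetition seq i p R" and start: "i < S m"
  shows "i + R \<le> S (Suc m)"
proof (rule ccontr)
  assume "\<not> ?thesis"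
  then have covered: "S m < i + R" "i < S (Suc m)" "S (Suc m) < i + R"
    using start S_Suc[of m] L_pos[of m] by auto
  define j where "j = blk (S m + p)"
  define j' where "j' = blk (S (Suc m) + p)"
  have Sj: "S j = S m + p" and j: "j mod 2 = m mod 2"
    using boundary_image[OF p rep start covered(1)] unfolding j_def by auto
  have Sj': "S j' = S (Suc m) + p" and j': "j' mod 2 = Suc m mod 2"
    using boundary_image[OF p rep covered(2,3)] unfolding j'_def by auto
  have "m < j" using Sj p strict_mono_less[OF S_strict_mono] by (metis less_add_same_cancel1)
  with j have "Suc m < j" by presburger
  then have "L m < L j" using strict_monoD[OF L_strict_mono] by simp
  have "j < j'" using Sj Sj' S_Suc[of m] L_pos[of m] strict_mono_less[OF S_strict_mono]
    by (metis add_less_mono1 less_add_same_cancel1)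
  with j j' have "Suc j \<le> j'" by presburger
  then have "S j + L j \<le> S j'" using strict_mono_less_eq[OF S_strict_mono] S_Suc by metis
  with Sj Sj' S_Suc[of m] \<open>L m < L j\<close> show False by simp
qed

lemma short_run_bound:
  assumes "real R \<le> 2 * real (L m)" and "L (Suc m) \<le> p"
  shows "real R + real p \<le> \<alpha> * real p"
proof -
  have "real R \<le> (\<alpha> - 1) * real (L (Suc m))" using assms(1) L_growth[of m] by simp
  also have "\<dots> \<le> (\<alpha> - 1) * real p" using assms(2) alpha_gt_1 by simp
  finally show ?thesis by (simp add: algebra_simps)
qed

(* A repetition whose copies start in different blocks k and k' >= k + 2: its period is at
   least L (k+1); if it covers the boundary S (k+1), the image boundary lies beyond S k', so
   the period is even at least L (k+2), while the repetition has length at most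
   L k + L (k+1). *)
lemma run_across_blocks:
  assumes p: "0 < p" and rep: "repetition seq i p R" and R: "0 < R"
    and differ: "blk (i + p) \<noteq> blk i"
  shows "real R + real p \<le> \<alpha> * real p"
proof -
  define k where "k = blk i"
  define k' where "k' = blk (i + p)"
  have i: "S k \<le> i" "i < S (Suc k)" using blk_lower blk_upper unfolding k_def by auto
  have "k \<le> k'" unfolding k_def k'_def by (rule blk_mono) simp
  moreover have "k mod 2 = k' mod 2"
    using repetition_blk_parity[OF rep R] unfolding k_def k'_def by simp
  ultimately have k': "Suc (Suc k) \<le> k'" using differ unfolding k_def k'_def by presburger
  then have "S (Suc (Suc k)) \<le> i + p"
    using blk_lower[of "i + p"] strict_mono_less_eq[OF S_strict_mono] unfolding k'_def
    by (meson order.trans)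
  then have p_long: "L (Suc k) \<le> p" using i S_Suc[of "Suc k"] by simp
  have R_short: "i + R \<le> S (Suc (Suc k))" by (rule at_most_one_boundary[OF p rep i(2)])
  show ?thesis
  proof (cases "i + R \<le> S (Suc k)")
    case True
    then have "real R \<le> 2 * real (L k)" using i S_Suc[of k] by simp
    then show ?thesis using p_long by (rule short_run_bound)
  next
    case False
    define j where "j = blk (S (Suc k) + p)"
    have Sj: "S j = S (Suc k) + p" and j: "j mod 2 = Suc k mod 2"
      using boundary_image[OF p rep i(2)] False unfolding j_def by auto
    have "S k' < S j" using Sj blk_lower[of "i + p"] i unfolding k'_def by simp
    then have "k' < j" using strict_mono_less[OF S_strict_mono] by blast
    with k' j have "Suc (Suc (Suc k)) \<le> j" by presburger
    then have "S (Suc (Suc (Suc k))) \<le> S j" using strict_mono_less_eq[OF S_strict_mono] by blast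
    then have "L (Suc (Suc k)) \<le> p" using Sj by (simp add: S_Suc)
    moreover have "real R \<le> 2 * real (L (Suc k))"
      using R_short i S_Suc[of k] S_Suc[of "Suc k"] strict_monoD[OF L_strict_mono, of k "Suc k"]
      by simp
    ultimately show ?thesis by (intro short_run_bound) simp
  qed
qed

lemma run_bound:
  assumes p: "0 < p" and rep: "repetition seq i p R"
  shows "real R + real p \<le> \<alpha> * real p"
proof (cases "R = 0")
  case True
  have "1 * real p \<le> \<alpha> * real p" using alpha_gt_1 by (intro mult_right_mono) auto
  then show ?thesis using True by simp
next
  case False
  show ?thesis
  proof (cases "blk (i + p) = blk i")
    case True
    show ?thesis
      using run_inside_block[OF p rep blk_lower run_stays_in_block[OF p rep True]] .
  next
    case False
    then show ?thesis using run_across_blocks[OF p rep] \<open>R \<noteq> 0\<close> by simp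
  qed
qed

lemma block_frac_power:
  obtains Z X where "frac_power_of Z X" "occurs_in Z seq" "length Z = L k" "length X = P k"
proof (rule periodic_factor_frac_power[OF P_pos P_le_L])
  show "\<forall>j<L k. seq (S k + j) = (\<lambda>x. 2 * letter N x + k mod 2) (j mod P k)"
    using seq_in_block[of k] S_Suc by simp
qed (rule that)

lemma block_exponents_approach_alpha:
  assumes e: "0 < e"
  shows "\<exists>Z X. frac_power_of Z X \<and> occurs_in Z seq \<and> \<alpha> - e < real (length Z) / real (length X)"
proof -
  obtain k :: nat where k: "1 / e < real k" using reals_Archimedean2 by blast
  have "k < 2 ^ k" by (rule less_exp)
  also have "(2::nat) ^ k \<le> P k" unfolding P_def using N_pos by (intro power_increasing) auto
  finally have "1 / e < real (P k)" using k by linarith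
  then have small: "1 / real (P k) < e" using e by (simp add: divide_less_eq mult.commute)
  have Pk: "0 < real (P k)" using P_pos[of k] by simp
  have "(\<alpha> * real (P k) - 1) / real (P k) < real (L k) / real (P k)"
    using L_gt[of k] Pk by (rule divide_strict_right_mono)
  then have "\<alpha> - 1 / real (P k) < real (L k) / real (P k)"
    using Pk by (simp add: diff_divide_distrib)
  moreover obtain Z X where "frac_power_of Z X" "occurs_in Z seq" "length Z = L k" "length X = P k"
    by (rule block_frac_power)
  ultimately show ?thesis using small by (intro exI[of _ Z] exI[of _ X]) auto
qed

theorem critical_exponent_seq: "critical_exponent seq = ereal \<alpha>"
  by (rule critical_exponent_eqI[OF run_bound block_exponents_approach_alpha])

lemma finite_range_seq: "finite (range seq)"
proof (rule finite_subset)
  show "range seq \<subseteq> {..2 * 2 ^ (N + 1) + 1}" using seq_bounded by auto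
qed simp

end

lemma block_base_exists:
  fixes \<alpha> :: real
  assumes "\<alpha> > 1"
  obtains N :: nat where "2 ^ N > \<alpha>" and "2 * \<alpha> \<le> (\<alpha> - 1) * 2 ^ N"
proof -
  have am: "\<alpha> - 1 > 0" and q: "2 * \<alpha> / (\<alpha> - 1) > 0" using assms by simp_all
  obtain N :: nat where N: "2 * \<alpha> / (\<alpha> - 1) + \<alpha> < real N" using reals_Archimedean2 by blast
  have "real N < 2 ^ N" using of_nat_less_iff[of N "2 ^ N"] less_exp[of N] by simp
  then have large: "2 * \<alpha> / (\<alpha> - 1) \<le> 2 ^ N" and gt: "2 ^ N > \<alpha>"
    using N q assms by linarith+
  have "(\<alpha> - 1) * (2 * \<alpha> / (\<alpha> - 1)) \<le> (\<alpha> - 1) * 2 ^ N"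
    using large am by (intro mult_left_mono) auto
  then show ?thesis using am by (intro that[OF gt]) simp
qed

theorem theorem2:
  fixes \<alpha> :: real
  assumes "\<alpha> > 1"
  shows "\<exists>w :: nat \<Rightarrow> nat. finite (range w) \<and> critical_exponent w = ereal \<alpha>"
proof -
  obtain N :: nat where "2 ^ N > \<alpha>" and "2 * \<alpha> \<le> (\<alpha> - 1) * 2 ^ N"
    using block_base_exists[OF assms] .
  then interpret block_word \<alpha> N using assms by unfold_locales
  show ?thesis using finite_range_seq critical_exponent_seq by blast
qed

end
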